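(* Let $X$ be a real or complex Banach space, $(A(n))_{n\in\mathbb{N}}$ a sequence in $\mathcal{B}(X)$, and $P:\mathbb{N}\to\mathcal{B}(X)$ a family of projections compatible with the system $x_{n+1}=A(n)x_n$, with complementary family $Q(n)=I-P(n)$. Then the system is $P$-uniformly exponentially dichotomic if and only if there exists a constant $D>0$ such that \[ \sum_{j=m}^{\infty}\|\mathcal{A}_P(j,n)x\|+\sum_{k=n}^{m}\|\mathcal{A}_Q(k,n)x\|\le D\big(\|\mathcal{A}_P(m,n)x\|+\|\mathcal{A}_Q(m,n)x\|\big) \] for all $(m,n)\in\Delta$ and all $x\in X$.
   Context: $\mathbb{N}$ denotes the set of positive integers; $\mathcal{B}(X)$ is the Banach algebra of bounded linear operators on $X$, and $I$ is the identity operator. $\Delta=\{(m,n)\in\mathbb{N}^2: m\ge n\}$. A family of projections is a map $P:\mathbb{N}\to\mathcal{B}(X)$ with $P(n)^2=P(n)$ for all $n$; its complementary family is $Q(n)=I-P(n)$. $P$ is compatible with the system $x_{n+1}=A(n)x_n$ if $A(n+1)P(n)=P(n+1)A(n+1)$ for all $n\in\mathbb{N}$. For $(m,n)\in\Delta$ define $\mathcal{A}_P(m,n)=A(m)\cdots A(n+1)P(n)$ if $m>n$ and $\mathcal{A}_P(n,n)=P(n)$; similarly $\mathcal{A}_Q(m,n)=A(m)\cdots A(n+1)Q(n)$ if $m>n$ and $\mathcal{A}_Q(n,n)=Q(n)$. The system is $P$-uniformly exponentially dichotomic if there exist constants $N\ge1$ and $\alpha>0$ such that $e^{\alpha(m-n)}\big(\|\mathcal{A}_P(m,n)x\|+\|Q(n)x\|\big)\le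 N\big(\|P(n)x\|+\|\mathcal{A}_Q(m,n)x\|\big)$ for all $(m,n)\in\Delta$, $x\in X$. *)

theory Defs
  imports "HOL-Analysis.Analysis"
begin

text \<open>Indices range over the positive integers; we use nat and guard with n \<ge> 1.
  evol A n k = A(n+k) o ... o A(n+1)  (identity for k = 0).\<close>

primrec evol :: "(nat \<Rightarrow> 'a::real_normed_vector \<Rightarrow>\<^sub>L 'a) \<Rightarrow> nat \<Rightarrow> nat \<Rightarrow> 'a \<Rightarrow>\<^sub>L 'a" where
  "evol A n 0 = id_blinfun"
| "evol A n (Suc k) = A (n + Suc k) o\<^sub>L evol A n k"

definition calA :: "(nat \<Rightarrow> 'a::real_normed_vector \<Rightarrow>\<^sub>L 'a) \<Rightarrow> (nat \<Rightarrow> 'a \<Rightarrow>\<^sub>L 'a) \<Rightarrow> nat \<Rightarrow> nat \<Rightarrow> 'a \<Rightarrow>\<^sub>L 'a" where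
  "calA A P m n = evol A n (m - n) o\<^sub>L P n"

definition compl_proj :: "(nat \<Rightarrow> 'a::real_normed_vector \<Rightarrow>\<^sub>L 'a) \<Rightarrow> nat \<Rightarrow> 'a \<Rightarrow>\<^sub>L 'a" where
  "compl_proj P n = id_blinfun - P n"

definition P_unif_exp_dich :: "(nat \<Rightarrow> 'a::real_normed_vector \<Rightarrow>\<^sub>L 'a) \<Rightarrow> (nat \<Rightarrow> 'a \<Rightarrow>\<^sub>L 'a) \<Rightarrow> bool" where
  "P_unif_exp_dich A P \<longleftrightarrow>
     (\<exists>N \<alpha>::real. N \<ge> 1 \<and> \<alpha> > 0 \<and>
       (\<forall>m n x. 1 \<le> n \<longrightarrow> n \<le> m \<longrightarrow>
          exp (\<alpha> * real (m - n)) *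
            (norm (blinfun_apply (calA A P m n) x) + norm (blinfun_apply (compl_proj P n) x))
          \<le> N * (norm (blinfun_apply (P n) x) + norm (blinfun_apply (calA A (compl_proj P) m n) x))))"

end

theory Submission
  imports Defs
begin

text \<open>
  Write \<open>Q = I - P\<close> and \<open>q = exp (-\<alpha>)\<close>. A dichotomy then reads
  \<open>\<parallel>A_P(m,n)x\<parallel> + \<parallel>Q(n)x\<parallel> \<le> N q^(m-n) (\<parallel>P(n)x\<parallel> + \<parallel>A_Q(m,n)x\<parallel>)\<close>.
  Applied at the initial time \<open>m\<close> to \<open>A_P(m,n)x\<close>, which lies in the range of \<open>P(m)\<close>,
  it gives \<open>\<parallel>A_P(m+j,n)x\<parallel> \<le> N q^j \<parallel>A_P(m,n)x\<parallel>\<close>; applied at time \<open>k\<close> to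
  \<open>A_Q(k,n)x\<close> it gives \<open>\<parallel>A_Q(k,n)x\<parallel> \<le> N q^(m-k) \<parallel>A_Q(m,n)x\<parallel>\<close>. Summing the
  geometric series yields the sum bound with \<open>D = N / (1 - q)\<close>.

  Conversely, if the tail sums \<open>S_m\<close> of a nonnegative sequence satisfy \<open>S_m \<le> D a_m\<close>,
  then \<open>S_(m+1) = S_m - a_m \<le> (1 - 1/D) S_m\<close>, so \<open>a_m\<close> decays geometrically; dually,
  partial sums \<open>T_m \<le> D b_m\<close> force \<open>T_m \<le> (1 - 1/D) T_(m+1)\<close>, i.e. geometric growth.
  Applying the sum bound to \<open>P(n)x\<close> and to \<open>Q(n)x\<close> recovers a dichotomy with
  \<open>N = D\<close> and \<open>q = 1 - 1/D\<close>.
\<close>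

lemma tail_sums_bounded_imp_geometric_decay:
  fixes a :: "nat \<Rightarrow> real"
  assumes "1 \<le> D" and nonneg: "\<And>j. 0 \<le> a j" and "summable a"
    and bound: "\<And>m. (\<Sum>j. a (m + j)) \<le> D * a m"
  shows "a m \<le> D * (1 - 1 / D) ^ m * a 0"
proof -
  define q where "q = 1 - 1 / D"
  define S where "S m = (\<Sum>j. a (m + j))" for m
  have q: "0 \<le> q" using \<open>1 \<le> D\<close> by (simp add: q_def)
  have summable: "summable (\<lambda>j. a (m + j))" for m
    using \<open>summable a\<close> by (subst add.commute) (simp add: summable_iff_shift)
  have split: "S m = a m + S (Suc m)" for m
    using suminf_split_head[OF summable[of m]] by (simp add: S_def)
  have S_nonneg: "0 \<le> S m" for m
    unfolding S_def using summable nonneg by (intro suminf_nonneg) auto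
  have step: "S (Suc m) \<le> q * S m" for m
    using split[of m] bound[of m] \<open>1 \<le> D\<close> by (simp add: S_def q_def field_simps)
  have "S m \<le> q ^ m * S 0" for m
  proof (induction m)
    case (Suc m)
    from step[of m] have "S (Suc m) \<le> q * S m" .
    also have "\<dots> \<le> q * (q ^ m * S 0)" using Suc q by (rule mult_left_mono)
    finally show ?case by (simp add: mult.assoc)
  qed simp
  moreover have "a m \<le> S m"
    using split[of m] S_nonneg[of "Suc m"] by simp
  moreover have "S 0 \<le> D * a 0"
    using bound[of 0] by (simp add: S_def)
  ultimately have "a m \<le> q ^ m * (D * a 0)"
    by (meson order_trans mult_left_mono zero_le_power q)
  then show ?thesis by (simp add: q_def mult_ac)
qed

lemma partial_sums_bounded_imp_geometric_growth:
  fixes b :: "nat \<Rightarrow> real"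
  assumes "1 \<le> D" and nonneg: "\<And>k. 0 \<le> b k"
    and bound: "\<And>m. (\<Sum>k\<le>m. b k) \<le> D * b m"
  shows "b 0 \<le> D * (1 - 1 / D) ^ m * b m"
proof -
  define q where "q = 1 - 1 / D"
  define T where "T m = (\<Sum>k\<le>m. b k)" for m
  have q: "0 \<le> q" using \<open>1 \<le> D\<close> by (simp add: q_def)
  have step: "T m \<le> q * T (Suc m)" for m
    using bound[of "Suc m"] \<open>1 \<le> D\<close> by (simp add: T_def q_def field_simps)
  have "T 0 \<le> q ^ m * T m" for m
  proof (induction m)
    case (Suc m)
    have "T 0 \<le> q ^ m * T m" by (fact Suc.IH)
    also have "q ^ m * T m \<le> q ^ m * (q * T (Suc m))" using step[of m] q by (simp add: mult_left_mono)
    finally show ?case by (simp add: mult_ac)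
  qed simp
  also have "q ^ m * T m \<le> q ^ m * (D * b m)"
    using bound[of m] q by (simp add: T_def mult_left_mono)
  finally show ?thesis by (simp add: T_def q_def mult_ac)
qed

lemma sum_reversed_powers_le:
  fixes q :: real
  assumes "0 \<le> q" "q < 1"
  shows "(\<Sum>k=n..m. q ^ (m - k)) \<le> 1 / (1 - q)"
proof -
  have "(\<Sum>k=n..m. q ^ (m - k)) \<le> (\<Sum>k<Suc m. q ^ (m - k))"
    using \<open>0 \<le> q\<close> by (intro sum_mono2) auto
  also have "\<dots> = (\<Sum>k<Suc m. q ^ k)"
    using sum.nat_diff_reindex[of "\<lambda>k. q ^ k" "Suc m"] by simp
  also have "\<dots> \<le> (\<Sum>k. q ^ k)"
    using assms by (intro sum_le_suminf summable_geometric) auto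
  also have "\<dots> = 1 / (1 - q)"
    using assms by (simp add: suminf_geometric)
  finally show ?thesis .
qed

lemma evol_add: "evol A n (k + l) = evol A (n + k) l o\<^sub>L evol A n k"
  by (induction l) (auto intro!: blinfun_eqI simp: add.assoc)

lemma calA_apply: "calA A P m n x = evol A n (m - n) (P n x)"
  by (simp add: calA_def)

lemma compl_proj_apply: "compl_proj P n x = x - P n x"
  by (simp add: compl_proj_def blinfun.diff_left)

definition geometric_dichotomy ::
    "(nat \<Rightarrow> 'a::real_normed_vector \<Rightarrow>\<^sub>L 'a) \<Rightarrow> (nat \<Rightarrow> 'a \<Rightarrow>\<^sub>L 'a) \<Rightarrow> real \<Rightarrow> real \<Rightarrow> bool" where
  "geometric_dichotomy A P N q \<longleftrightarrow>
     (\<forall>m n x. 1 \<le> n \<longrightarrow> n \<le> m \<longrightarrow>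
        norm (calA A P m n x) + norm (compl_proj P n x)
          \<le> N * q ^ (m - n) * (norm (P n x) + norm (calA A (compl_proj P) m n x)))"

lemma P_unif_exp_dich_iff_geometric:
  "P_unif_exp_dich A P \<longleftrightarrow> (\<exists>N q. 1 \<le> N \<and> 0 < q \<and> q < 1 \<and> geometric_dichotomy A P N q)"
proof -
  have rescale: "exp (\<alpha> * real k) * L \<le> N * R \<longleftrightarrow> L \<le> N * exp (- \<alpha>) ^ k * R"
    for \<alpha> L N R :: real and k :: nat
  proof -
    have "exp (- \<alpha>) ^ k = exp (- (\<alpha> * real k))"
      by (metis exp_of_nat_mult mult.commute mult_minus_left)
    then have "exp (- \<alpha>) ^ k = 1 / exp (\<alpha> * real k)"
      by (simp add: exp_minus inverse_eq_divide)
    then have "N * exp (- \<alpha>) ^ k * R = N * R / exp (\<alpha> * real k)"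
      by simp
    then show ?thesis
      by (simp add: pos_le_divide_eq mult.commute)
  qed
  show ?thesis
  proof
    assume "P_unif_exp_dich A P"
    then obtain N \<alpha> where "1 \<le> N" "0 < \<alpha>" and dich: "\<forall>m n x. 1 \<le> n \<longrightarrow> n \<le> m \<longrightarrow>
        exp (\<alpha> * real (m - n)) * (norm (calA A P m n x) + norm (compl_proj P n x))
          \<le> N * (norm (P n x) + norm (calA A (compl_proj P) m n x))"
      unfolding P_unif_exp_dich_def by blast
    then have "geometric_dichotomy A P N (exp (- \<alpha>))"
      unfolding geometric_dichotomy_def rescale by blast
    with \<open>1 \<le> N\<close> \<open>0 < \<alpha>\<close> show "\<exists>N q. 1 \<le> N \<and> 0 < q \<and> q < 1 \<and> geometric_dichotomy A P N q"
      by (intro exI[of _ N] exI[of _ "exp (- \<alpha>)"]) auto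
  next
    assume "\<exists>N q. 1 \<le> N \<and> 0 < q \<and> q < 1 \<and> geometric_dichotomy A P N q"
    then obtain N q where "1 \<le> N" "0 < q" "q < 1" "geometric_dichotomy A P N q"
      by blast
    moreover have "exp (- (- ln q)) = q" and "0 < - ln q"
      using \<open>0 < q\<close> \<open>q < 1\<close> by simp_all
    ultimately show "P_unif_exp_dich A P"
      unfolding P_unif_exp_dich_def geometric_dichotomy_def rescale by metis
  qed
qed

definition sum_dichotomy_bound ::
    "(nat \<Rightarrow> 'a::real_normed_vector \<Rightarrow>\<^sub>L 'a) \<Rightarrow> (nat \<Rightarrow> 'a \<Rightarrow>\<^sub>L 'a) \<Rightarrow> real \<Rightarrow> bool" where
  "sum_dichotomy_bound A P D \<longleftrightarrow>
     (\<forall>m n x. 1 \<le> n \<longrightarrow> n \<le> m \<longrightarrow>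
        summable (\<lambda>j. norm (calA A P (m + j) n x)) \<and>
        (\<Sum>j. norm (calA A P (m + j) n x)) + (\<Sum>k=n..m. norm (calA A (compl_proj P) k n x))
          \<le> D * (norm (calA A P m n x) + norm (calA A (compl_proj P) m n x)))"

lemma sum_dichotomy_bound_mono:
  assumes "sum_dichotomy_bound A P D" "D \<le> D'"
  shows "sum_dichotomy_bound A P D'"
  unfolding sum_dichotomy_bound_def
proof (intro allI impI)
  fix m n :: nat and x
  assume "1 \<le> n" "n \<le> m"
  let ?R = "norm (calA A P m n x) + norm (calA A (compl_proj P) m n x)"
  have "summable (\<lambda>j. norm (calA A P (m + j) n x)) \<and>
      (\<Sum>j. norm (calA A P (m + j) n x)) + (\<Sum>k=n..m. norm (calA A (compl_proj P) k n x)) \<le> D * ?R"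
    using assms(1) \<open>1 \<le> n\<close> \<open>n \<le> m\<close> unfolding sum_dichotomy_bound_def by blast
  moreover have "D * ?R \<le> D' * ?R"
    using \<open>D \<le> D'\<close> by (simp add: mult_right_mono)
  ultimately show "summable (\<lambda>j. norm (calA A P (m + j) n x)) \<and>
      (\<Sum>j. norm (calA A P (m + j) n x)) + (\<Sum>k=n..m. norm (calA A (compl_proj P) k n x)) \<le> D' * ?R"
    by linarith
qed

locale compatible_projections =
  fixes A P :: "nat \<Rightarrow> ('a::real_normed_vector \<Rightarrow>\<^sub>L 'a)"
  assumes proj: "\<And>n. 1 \<le> n \<Longrightarrow> P n o\<^sub>L P n = P n"
    and compat: "\<And>n. 1 \<le> n \<Longrightarrow> A (n + 1) o\<^sub>L P n = P (n + 1) o\<^sub>L A (n + 1)"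
begin

lemma proj_idem: "1 \<le> n \<Longrightarrow> P n (P n x) = P n x"
  using proj by (metis blinfun_apply_blinfun_compose)

lemma proj_compl_proj: "1 \<le> n \<Longrightarrow> P n (x - P n x) = 0"
  by (simp add: proj_idem blinfun.diff_right)

lemma proj_evol:
  assumes "1 \<le> n"
  shows "P (n + k) (evol A n k x) = evol A n k (P n x)"
proof (induction k)
  case (Suc k)
  have "A (n + k + 1) (P (n + k) y) = P (n + k + 1) (A (n + k + 1) y)" for y
    using compat[of "n + k"] assms by (metis blinfun_apply_blinfun_compose le_add1 order_trans)
  then show ?case
    by (simp flip: Suc.IH)
qed simp

lemma proj_calA:
  assumes "1 \<le> n" "n \<le> m"
  shows "P m (calA A P m n x) = calA A P m n x"
    and "P m (calA A (compl_proj P) m n x) = 0"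
  using proj_evol[OF assms(1), of "m - n"] assms
  by (simp_all add: calA_apply compl_proj_apply proj_idem proj_compl_proj)

lemma calA_trans:
  assumes "1 \<le> n" "n \<le> m" "m \<le> j"
  shows "calA A P j m (calA A P m n x) = calA A P j n x"
    and "calA A (compl_proj P) j m (calA A (compl_proj P) m n x) = calA A (compl_proj P) j n x"
proof -
  have "j - n = (m - n) + (j - m)" "n + (m - n) = m" using assms by auto
  then have "evol A n (j - n) y = evol A m (j - m) (evol A n (m - n) y)" for y
    by (metis evol_add blinfun_apply_blinfun_compose)
  then show "calA A P j m (calA A P m n x) = calA A P j n x"
    and "calA A (compl_proj P) j m (calA A (compl_proj P) m n x) = calA A (compl_proj P) j n x"
    using proj_calA[OF assms(1,2)] by (simp_all add: calA_apply compl_proj_apply)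
qed

lemma geometric_dichotomy_stable:
  assumes "geometric_dichotomy A P N q" "1 \<le> n" "n \<le> m"
  shows "norm (calA A P (m + j) n x) \<le> N * norm (calA A P m n x) * q ^ j"
proof -
  let ?y = "calA A P m n x"
  have "norm (calA A P (m + j) m ?y) + norm (compl_proj P m ?y)
      \<le> N * q ^ j * (norm (P m ?y) + norm (calA A (compl_proj P) (m + j) m ?y))"
    using assms(1)[unfolded geometric_dichotomy_def, rule_format, of m "m + j" ?y] assms(2,3) by simp
  then show ?thesis
    using calA_trans(1)[of n m "m + j"] proj_calA(1)[of n m] assms(2,3)
    by (simp add: calA_apply compl_proj_apply mult_ac)
qed

lemma geometric_dichotomy_unstable:
  assumes "geometric_dichotomy A P N q" "1 \<le> n" "n \<le> k" "k \<le> m"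
  shows "norm (calA A (compl_proj P) k n x) \<le> N * q ^ (m - k) * norm (calA A (compl_proj P) m n x)"
proof -
  let ?y = "calA A (compl_proj P) k n x"
  have "norm (calA A P m k ?y) + norm (compl_proj P k ?y)
      \<le> N * q ^ (m - k) * (norm (P k ?y) + norm (calA A (compl_proj P) m k ?y))"
    using assms(1)[unfolded geometric_dichotomy_def, rule_format, of k m ?y] assms(2-4) by simp
  then show ?thesis
    using calA_trans(2)[of n k m] proj_calA(2)[of n k] assms(2-4)
    by (simp add: calA_apply compl_proj_apply)
qed

lemma geometric_dichotomy_imp_sum_dichotomy_bound:
  assumes dich: "geometric_dichotomy A P N q" and "0 \<le> N" "0 \<le> q" "q < 1"
  shows "sum_dichotomy_bound A P (N / (1 - q))"
  unfolding sum_dichotomy_bound_def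
proof (intro allI impI conjI)
  fix m n :: nat and x
  assume n: "1 \<le> n" "n \<le> m"
  let ?a = "norm (calA A P m n x)" and ?b = "norm (calA A (compl_proj P) m n x)"
  have geometric: "summable (\<lambda>j. N * ?a * q ^ j)" "(\<Sum>j. N * ?a * q ^ j) = N / (1 - q) * ?a"
    using assms by (simp_all add: summable_geometric suminf_mult suminf_geometric)
  show summable: "summable (\<lambda>j. norm (calA A P (m + j) n x))"
    using geometric_dichotomy_stable[OF dich n] by (intro summable_comparison_test'[OF geometric(1)]) auto
  have "(\<Sum>j. norm (calA A P (m + j) n x)) \<le> N / (1 - q) * ?a"
    unfolding geometric(2)[symmetric]
    using geometric_dichotomy_stable[OF dich n] by (intro suminf_le summable geometric(1)) auto
  moreover have "(\<Sum>k=n..m. norm (calA A (compl_proj P) k n x)) \<le> N / (1 - q) * ?b"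
  proof -
    have "(\<Sum>k=n..m. norm (calA A (compl_proj P) k n x)) \<le> (\<Sum>k=n..m. N * ?b * q ^ (m - k))"
      using geometric_dichotomy_unstable[OF dich n(1)] n(2) by (intro sum_mono) (auto simp: mult_ac)
    also have "\<dots> = N * ?b * (\<Sum>k=n..m. q ^ (m - k))"
      by (simp add: sum_distrib_left)
    also have "\<dots> \<le> N * ?b * (1 / (1 - q))"
      using sum_reversed_powers_le[OF \<open>0 \<le> q\<close> \<open>q < 1\<close>] \<open>0 \<le> N\<close> by (intro mult_left_mono) auto
    finally show ?thesis by simp
  qed
  ultimately show "(\<Sum>j. norm (calA A P (m + j) n x)) + (\<Sum>k=n..m. norm (calA A (compl_proj P) k n x))
      \<le> N / (1 - q) * (?a + ?b)"
    by (simp add: distrib_left)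
qed

lemma sum_dichotomy_bound_stable:
  assumes bound: "sum_dichotomy_bound A P D" and "1 \<le> D" "1 \<le> n" "n \<le> m"
  shows "norm (calA A P m n x) \<le> D * (1 - 1 / D) ^ (m - n) * norm (P n x)"
proof -
  define a where "a = (\<lambda>j. norm (calA A P (n + j) n x))"
  have tail: "summable (\<lambda>j. a (i + j)) \<and> (\<Sum>j. a (i + j)) \<le> D * a i" for i
    using bound[unfolded sum_dichotomy_bound_def, rule_format, of n "n + i" "P n x"] \<open>1 \<le> n\<close>
    by (simp add: a_def calA_apply compl_proj_apply proj_idem add.assoc)
  moreover have "summable a"
    using tail[of 0] by simp
  ultimately have "a (m - n) \<le> D * (1 - 1 / D) ^ (m - n) * a 0"
    using \<open>1 \<le> D\<close> by (intro tail_sums_bounded_imp_geometric_decay) (auto simp: a_def)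
  then show ?thesis
    using \<open>n \<le> m\<close> by (simp add: a_def calA_apply)
qed

lemma sum_dichotomy_bound_unstable:
  assumes bound: "sum_dichotomy_bound A P D" and "1 \<le> D" "1 \<le> n" "n \<le> m"
  shows "norm (compl_proj P n x) \<le> D * (1 - 1 / D) ^ (m - n) * norm (calA A (compl_proj P) m n x)"
proof -
  define b where "b = (\<lambda>k. norm (calA A (compl_proj P) (n + k) n x))"
  have "(\<Sum>k=n..n + i. f k) = (\<Sum>k\<le>i. f (n + k))" for f :: "nat \<Rightarrow> real" and i
    using sum.shift_bounds_cl_nat_ivl[of f 0 n i] by (simp add: atLeast0AtMost add.commute)
  then have "(\<Sum>k\<le>i. b k) \<le> D * b i" for i
    using bound[unfolded sum_dichotomy_bound_def, rule_format, of n "n + i" "x - P n x"] \<open>1 \<le> n\<close>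
    by (simp add: b_def calA_apply compl_proj_apply proj_compl_proj)
  then have "b 0 \<le> D * (1 - 1 / D) ^ (m - n) * b (m - n)"
    using \<open>1 \<le> D\<close> by (intro partial_sums_bounded_imp_geometric_growth) (auto simp: b_def)
  then show ?thesis
    using \<open>n \<le> m\<close> by (simp add: b_def calA_apply compl_proj_apply)
qed

lemma sum_dichotomy_bound_imp_geometric_dichotomy:
  assumes "sum_dichotomy_bound A P D" "1 \<le> D"
  shows "geometric_dichotomy A P D (1 - 1 / D)"
  unfolding geometric_dichotomy_def
  using add_mono[OF sum_dichotomy_bound_stable[OF assms] sum_dichotomy_bound_unstable[OF assms]]
  by (simp add: distrib_left)

end

theorem mainTheorem3:
  fixes A P :: "nat \<Rightarrow> ('a::banach \<Rightarrow>\<^sub>L 'a)"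
  assumes proj: "\<And>n. 1 \<le> n \<Longrightarrow> P n o\<^sub>L P n = P n"
    and compat: "\<And>n. 1 \<le> n \<Longrightarrow> A (n + 1) o\<^sub>L P n = P (n + 1) o\<^sub>L A (n + 1)"
  shows "P_unif_exp_dich A P \<longleftrightarrow>
    (\<exists>D::real. D > 0 \<and>
      (\<forall>m n x. 1 \<le> n \<longrightarrow> n \<le> m \<longrightarrow>
         summable (\<lambda>j. norm (blinfun_apply (calA A P (m + j) n) x)) \<and>
         (\<Sum>j. norm (blinfun_apply (calA A P (m + j) n) x))
           + (\<Sum>k=n..m. norm (blinfun_apply (calA A (compl_proj P) k n) x))
         \<le> D * (norm (blinfun_apply (calA A P m n) x)
                 + norm (blinfun_apply (calA A (compl_proj P) m n) x))))"
proof -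
  interpret compatible_projections A P
    using proj compat by unfold_locales
  have "P_unif_exp_dich A P \<longleftrightarrow> (\<exists>D > 0. sum_dichotomy_bound A P D)"
  proof
    assume "P_unif_exp_dich A P"
    then obtain N q where "1 \<le> N" "0 < q" "q < 1" "geometric_dichotomy A P N q"
      unfolding P_unif_exp_dich_iff_geometric by blast
    then have "sum_dichotomy_bound A P (N / (1 - q))" and "N / (1 - q) > 0"
      by (simp_all add: geometric_dichotomy_imp_sum_dichotomy_bound)
    then show "\<exists>D > 0. sum_dichotomy_bound A P D"
      by blast
  next
    assume "\<exists>D > 0. sum_dichotomy_bound A P D"
    \<comment> \<open>passing to \<open>D + 1\<close> makes the ratio \<open>1 - 1 / (D + 1)\<close> positive\<close>
    then obtain D where "D > 0" "sum_dichotomy_bound A P (D + 1)"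
      using sum_dichotomy_bound_mono by force
    then have "geometric_dichotomy A P (D + 1) (1 - 1 / (D + 1))"
      using sum_dichotomy_bound_imp_geometric_dichotomy by simp
    with \<open>D > 0\<close> show "P_unif_exp_dich A P"
      unfolding P_unif_exp_dich_iff_geometric by (intro exI[of _ "D + 1"] exI[of _ "1 - 1 / (D + 1)"]) auto
  qed
  then show ?thesis
    unfolding sum_dichotomy_bound_def .
qed

end
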